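(* Consider the control-affine system $\dot{x}(t) = f(x(t)) + g(x(t))u(t) + d(t)$ on $t \ge 0$, with $x(t)\in\mathbb{R}^n$, $u(t)\in\mathbb{R}^m$, $f,g$ continuously differentiable, and $d(t)\in\mathbb{R}^n$ the (unknown) disturbance. Let $\phi_t:\mathbb{R}^{nM}\to\mathbb{R}^{n\times p}$ be a representation map, $z(t)$ the time-delay embedding of past states, and $\theta^*\in\mathbb{R}^{p}$ a constant parameter such that $$d(t) = \phi_t(z(t))\theta^* + \gamma(t),$$ where $t\mapsto \phi_t(z(t))\theta^*$ is differentiable and the learning residual $\gamma$ is differentiable with $\|\gamma(t)\|\le\bar\gamma$ and $\|\dot\gamma(t)\|\le \bar d_\gamma$ for all $t\ge 0$, for positive constants $\bar\gamma,\bar d_\gamma$. Let $L\in\mathbb{R}^{n\times n}$ be symmetric positive definite, set $d_{model}(t)=\phi_t(z(t))\theta^*$, and define the estimator $$\dot{\xi} = -L\big(\xi + d_{model} + Lx + f(x) + g(x)u\big),\qquad \hat d = d_{model} + Lx + \xi,$$ with arbitrary initial condition $\xi(0)\in\mathbb{R}^n$. Then the disturbance estimation error $\tilde d = \hat d - d$ satisfies $$\|\tilde d(t)\| \le e^{-\lambda_{\min}(L)t}\|\tilde d(0)\| + \frac{\bar d_\gamma}{\lambda_{\min}(L)}\big(1-e^{-\lambda_{\min}(L)t}\big)\quad\text{for all } t\ge0,$$ i.e. $\tilde d$ converges exponentially to the ball $\{\|\tilde d\|\le \bar d_\gamma/\lambda_{\min}(L)\}$, whose radius depends only on $L$ and $\bar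 d_\gamma$ (and not on $\bar\gamma$).
   Context: $\lambda_{\min}(L)$ denotes the smallest eigenvalue of $L$. The time-delay embedding is $z=[x(t),x(t-\tau),\dots,x(t-M\tau)]$ (a finite window of past states); only the differentiability in time of $\phi_t(z(t))\theta^*$ is used. The auxiliary variable $\xi$ is introduced so that the state derivative $\dot x$ is not needed. All signals are assumed to be absolutely continuous / differentiable as required so that the estimator ODE has a solution. *)

theory Defs
  imports "HOL-Analysis.Analysis"
begin

definition matrix_eigenvalues :: "real^'n^'n \<Rightarrow> real set" where
  "matrix_eigenvalues A = {c. \<exists>v. v \<noteq> 0 \<and> A *v v = c *\<^sub>R v}"

definition lambda_min :: "real^'n^'n \<Rightarrow> real" where
  "lambda_min A = Min (matrix_eigenvalues A)"

definition symmetric_matrix :: "real^'n^'n \<Rightarrow> bool" where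
  "symmetric_matrix A \<longleftrightarrow> transpose A = A"

definition pos_def_matrix :: "real^'n^'n \<Rightarrow> bool" where
  "pos_def_matrix A \<longleftrightarrow> (\<forall>v. v \<noteq> 0 \<longrightarrow> v \<bullet> (A *v v) > 0)"

definition C1_map :: "('a::euclidean_space \<Rightarrow> 'b::euclidean_space) \<Rightarrow> bool" where
  "C1_map h \<longleftrightarrow> (\<exists>h'. (\<forall>y. (h has_derivative blinfun_apply (h' y)) (at y)) \<and> continuous_on UNIV h')"

definition delay_embedding :: "(real \<Rightarrow> 'a) \<Rightarrow> real \<Rightarrow> nat \<Rightarrow> real \<Rightarrow> 'a list" where
  "delay_embedding x \<tau> M t = map (\<lambda>j. x (t - real j * \<tau>)) [0..<Suc M]"

end

theory Submission
  imports Defs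
begin

(*
  With E = L x + xi - gamma the model part of the disturbance cancels: the estimation error
  is dhat - d = E and it obeys dE/dt = - L E - gamma'.  Since E . L E >= lambda_min(L) |E|^2
  (lambda_min(L) is the minimum of the Rayleigh quotient of the symmetric matrix L), this
  gives d|E|/dt <= - lambda_min(L) |E| + dgamma, and the comparison principle for this scalar
  linear inequality yields the bound.  As |E| need not be differentiable where E = 0, the
  comparison is applied to sqrt(|E|^2 + eps^2) and then eps tends to 0.
*)

lemma symmetric_matrix_inner_commute:
  fixes L :: "real^'n^'n"
  assumes "symmetric_matrix L"
  shows "x \<bullet> (L *v y) = (L *v x) \<bullet> y"
proof -
  have "x \<bullet> (L *v y) = (x v* L) \<bullet> y"
    by (simp add: dot_lmul_matrix)
  also have "x v* L = transpose L *v x"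
    by simp
  finally show ?thesis
    using assms by (simp only: symmetric_matrix_def)
qed

lemma quadratic_nonneg_imp_linear_coeff_eq_0:
  fixes a b :: real
  assumes "\<And>t. 0 \<le> a * t\<^sup>2 + 2 * b * t"
  shows "b = 0"
proof (rule ccontr)
  assume "b \<noteq> 0"
  have "a \<ge> 0"
    using assms[of 1] assms[of "-1"] by simp
  define t where "t = - b / (a + 1)"
  have t: "t * (a + 1) = - b"
    using \<open>a \<ge> 0\<close> by (simp add: t_def)
  have "(a + 1)\<^sup>2 * (a * t\<^sup>2 + 2 * b * t) = a * (t * (a + 1))\<^sup>2 + 2 * b * (a + 1) * (t * (a + 1))"
    by (simp add: power2_eq_square algebra_simps)
  also have "\<dots> = - b\<^sup>2 * (a + 2)"
    unfolding t by (simp add: power2_eq_square algebra_simps)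
  also have "\<dots> < 0"
    using \<open>a \<ge> 0\<close> \<open>b \<noteq> 0\<close> by (simp add: mult_neg_pos)
  finally show False
    using assms[of t] by (metis zero_le_power2 mult_nonneg_nonneg not_less)
qed

lemma selfadjoint_psd_form_eq_0_imp_eq_0:
  fixes B :: "'a::real_inner \<Rightarrow> 'a"
  assumes "linear B"
    and selfadjoint: "\<And>x y. x \<bullet> B y = B x \<bullet> y"
    and psd: "\<And>x. 0 \<le> x \<bullet> B x"
    and "v \<bullet> B v = 0"
  shows "B v = 0"
proof -
  let ?w = "B v"
  have "(v + t *\<^sub>R ?w) \<bullet> B (v + t *\<^sub>R ?w) = (?w \<bullet> B ?w) * t\<^sup>2 + 2 * (?w \<bullet> ?w) * t" for t
    using selfadjoint[of v ?w] \<open>v \<bullet> B v = 0\<close>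
    by (simp add: linear_add[OF \<open>linear B\<close>] linear_scale[OF \<open>linear B\<close>]
        inner_add_left inner_add_right power2_eq_square algebra_simps inner_commute)
  then have "?w \<bullet> ?w = 0"
    using psd by (intro quadratic_nonneg_imp_linear_coeff_eq_0[of "?w \<bullet> B ?w"]) metis
  then show ?thesis
    by simp
qed

lemma symmetric_matrix_rayleigh_min_eigenvalue:
  fixes L :: "real^'n^'n"
  assumes sym: "symmetric_matrix L"
  shows "\<exists>\<mu>\<in>matrix_eigenvalues L. \<forall>w. \<mu> * (w \<bullet> w) \<le> w \<bullet> (L *v w)"
proof -
  let ?q = "\<lambda>v::real^'n. v \<bullet> (L *v v)"
  have "(axis undefined 1 :: real^'n) \<in> sphere 0 1"
    by simp
  moreover have "continuous_on (sphere 0 1) ?q"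
    by (intro continuous_on_inner continuous_on_id matrix_vector_mult_linear_continuous_on)
  ultimately obtain v where v: "v \<in> sphere 0 1" and v_min: "\<And>w. w \<in> sphere 0 1 \<Longrightarrow> ?q v \<le> ?q w"
    using continuous_attains_inf[OF compact_sphere] by blast
  define \<mu> where "\<mu> = ?q v"
  have bound: "\<mu> * (w \<bullet> w) \<le> ?q w" for w
  proof (cases "w = 0")
    case False
    then have "\<mu> \<le> ?q ((1 / norm w) *\<^sub>R w)"
      unfolding \<mu>_def by (intro v_min) simp
    also have "\<dots> = ?q w / (norm w)\<^sup>2"
      by (simp add: matrix_vector_mult_scaleR power2_eq_square)
    finally show ?thesis
      using False by (simp add: field_simps power2_norm_eq_inner)
  qed simp
  define B where "B w = L *v w - \<mu> *\<^sub>R w" for w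
  have "B v = 0"
  proof (rule selfadjoint_psd_form_eq_0_imp_eq_0[of B])
    show "linear B"
      unfolding B_def by (intro linear_compose_sub matrix_vector_mul_linear linear_compose_scale_right linear_ident)
    show "x \<bullet> B y = B x \<bullet> y" for x y
      using symmetric_matrix_inner_commute[OF sym] by (simp add: B_def inner_diff)
    show "0 \<le> x \<bullet> B x" for x
      using bound[of x] by (simp add: B_def inner_diff_right)
    show "v \<bullet> B v = 0"
      using v by (simp add: B_def inner_diff_right \<mu>_def flip: power2_norm_eq_inner)
  qed
  then have "L *v v = \<mu> *\<^sub>R v"
    by (simp add: B_def)
  moreover have "v \<noteq> 0"
    using v by auto
  ultimately have "\<mu> \<in> matrix_eigenvalues L"
    unfolding matrix_eigenvalues_def by blast
  then show ?thesis
    using bound by blast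
qed

lemma finite_matrix_eigenvalues:
  fixes L :: "real^'n^'n"
  assumes sym: "symmetric_matrix L"
  shows "finite (matrix_eigenvalues L)"
proof -
  let ?E = "matrix_eigenvalues L"
  define ev where "ev c = (SOME v. v \<noteq> 0 \<and> L *v v = c *\<^sub>R v)" for c
  have ev: "ev c \<noteq> 0 \<and> L *v ev c = c *\<^sub>R ev c" if "c \<in> ?E" for c
    using that unfolding ev_def matrix_eigenvalues_def by (rule CollectE) (rule someI_ex)
  have "inj_on ev ?E"
  proof (rule inj_onI)
    fix a b assume a: "a \<in> ?E" and b: "b \<in> ?E" and "ev a = ev b"
    then have "a *\<^sub>R ev a = b *\<^sub>R ev a"
      using ev[OF a] ev[OF b] by metis
    then show "a = b"
      using ev[OF a] by simp
  qed
  moreover have "pairwise orthogonal (ev ` ?E)"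
  proof (clarsimp simp: pairwise_def)
    fix a b assume a: "a \<in> ?E" and b: "b \<in> ?E" and "ev a \<noteq> ev b"
    then have "a \<noteq> b"
      by auto
    have "a * (ev a \<bullet> ev b) = ev a \<bullet> (L *v ev b)"
      using ev[OF a] symmetric_matrix_inner_commute[OF sym] by simp
    also have "\<dots> = b * (ev a \<bullet> ev b)"
      using ev[OF b] by simp
    finally show "orthogonal (ev a) (ev b)"
      using \<open>a \<noteq> b\<close> by (simp add: orthogonal_def)
  qed
  moreover have "0 \<notin> ev ` ?E"
    using ev by auto
  ultimately have "independent (ev ` ?E)"
    using pairwise_orthogonal_independent by blast
  then have "finite (ev ` ?E)"
    using independent_bound by blast
  then show ?thesis
    using \<open>inj_on ev ?E\<close> finite_imageD by blast
qed

lemma lambda_min_symmetric_matrix: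
  fixes L :: "real^'n^'n"
  assumes sym: "symmetric_matrix L"
  shows lambda_min_in_eigenvalues: "lambda_min L \<in> matrix_eigenvalues L"
    and lambda_min_le_quadratic_form: "lambda_min L * (w \<bullet> w) \<le> w \<bullet> (L *v w)"
proof -
  obtain \<mu> where \<mu>_eig: "\<mu> \<in> matrix_eigenvalues L" and bound: "\<forall>w. \<mu> * (w \<bullet> w) \<le> w \<bullet> (L *v w)"
    using symmetric_matrix_rayleigh_min_eigenvalue[OF sym] by blast
  have \<mu>_le: "\<mu> \<le> c" if c: "c \<in> matrix_eigenvalues L" for c
  proof -
    obtain u where u: "u \<noteq> 0" "L *v u = c *\<^sub>R u"
      using c by (auto simp: matrix_eigenvalues_def)
    then have "\<mu> * (u \<bullet> u) \<le> c * (u \<bullet> u)"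
      using bound[rule_format, of u] by simp
    then show ?thesis
      using u(1) by simp
  qed
  have "lambda_min L = \<mu>"
    unfolding lambda_min_def using finite_matrix_eigenvalues[OF sym] \<mu>_le \<mu>_eig by (rule Min_eqI)
  then show "lambda_min L \<in> matrix_eigenvalues L" "lambda_min L * (w \<bullet> w) \<le> w \<bullet> (L *v w)"
    using \<mu>_eig bound by simp_all
qed

lemma lambda_min_pos:
  fixes L :: "real^'n^'n"
  assumes "symmetric_matrix L" and "pos_def_matrix L"
  shows "lambda_min L > 0"
proof -
  obtain v where "v \<noteq> 0" "L *v v = lambda_min L *\<^sub>R v"
    using lambda_min_in_eigenvalues[OF assms(1)] by (auto simp: matrix_eigenvalues_def)
  moreover from this have "0 < lambda_min L * (v \<bullet> v)"
    using assms(2) unfolding pos_def_matrix_def by (metis inner_scaleR_right)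
  ultimately show ?thesis
    using inner_ge_zero[of v] by (auto simp: zero_less_mult_iff)
qed

lemma inner_neg_symmetric_mult_diff_le:
  fixes L :: "real^'n^'n" and e w :: "real^'n"
  assumes "symmetric_matrix L" and "norm w \<le> c"
  shows "e \<bullet> (- (L *v e) - w) \<le> - lambda_min L * (norm e)\<^sup>2 + c * norm e"
proof -
  have "lambda_min L * (norm e)\<^sup>2 \<le> e \<bullet> (L *v e)"
    using lambda_min_le_quadratic_form[OF assms(1), of e] by (simp add: power2_norm_eq_inner)
  moreover have "- (e \<bullet> w) \<le> norm e * norm w"
    using norm_cauchy_schwarz[of "- e" w] by simp
  moreover have "norm e * norm w \<le> c * norm e"
    using mult_left_mono[OF assms(2) norm_ge_zero[of e]] by (simp only: mult.commute)
  moreover have "e \<bullet> (- (L *v e) - w) = - (e \<bullet> (L *v e)) - e \<bullet> w"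
    by (simp only: inner_diff_right inner_minus_right)
  ultimately show ?thesis
    by linarith
qed

lemma differential_inequality_exp_bound:
  fixes y y' :: "real \<Rightarrow> real" and lam c t :: real
  assumes lam: "lam > 0"
    and der: "\<And>s. s \<ge> 0 \<Longrightarrow> (y has_real_derivative y' s) (at s within {0..})"
    and ineq: "\<And>s. s \<ge> 0 \<Longrightarrow> y' s \<le> - lam * y s + c"
    and t: "t \<ge> 0"
  shows "y t \<le> exp (- lam * t) * y 0 + c / lam * (1 - exp (- lam * t))"
proof -
  define k where "k s = exp (lam * s) * (y s - c / lam)" for s
  define k' where "k' s = exp (lam * s) * (lam * (y s - c / lam) + y' s)" for s
  have k_der: "(k has_real_derivative k' s) (at s within {0..})" if "s \<ge> 0" for s
    unfolding k_def k'_def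
    by (rule derivative_eq_intros der that refl)+ (simp add: algebra_simps)
  have k'_nonpos: "k' s \<le> 0" if "s \<ge> 0" for s
  proof -
    have "lam * (y s - c / lam) + y' s \<le> 0"
      using ineq[OF that] lam by (simp add: algebra_simps)
    then show ?thesis
      unfolding k'_def by (simp add: mult_nonneg_nonpos)
  qed
  have "k t \<le> k 0"
  proof (rule DERIV_nonpos_imp_decreasing_open[OF t])
    fix s assume s: "0 < s" "s < t"
    have "(k has_real_derivative k' s) (at s within {0<..})"
      by (rule DERIV_subset[OF k_der]) (use s in auto)
    then have "(k has_real_derivative k' s) (at s)"
      using s at_within_open[of s "{0<..}"] by simp
    then show "\<exists>y. (k has_real_derivative y) (at s) \<and> y \<le> 0"
      using k'_nonpos s by auto
  next
    have "continuous_on {0..} k"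
      by (rule DERIV_continuous_on[OF k_der]) simp
    then show "continuous_on {0..t} k"
      by (rule continuous_on_subset) auto
  qed
  then have "exp (lam * t) * (y t - c / lam) \<le> y 0 - c / lam"
    by (simp add: k_def)
  then have "y t - c / lam \<le> exp (- lam * t) * (y 0 - c / lam)"
    by (simp add: exp_minus field_simps)
  then show ?thesis
    by (simp add: algebra_simps)
qed

lemma has_real_derivative_sqrt_norm_sq_add:
  fixes E :: "real \<Rightarrow> 'a::real_inner"
  assumes E: "(E has_vector_derivative E') (at s within S)" and "\<epsilon> \<noteq> 0"
  shows "((\<lambda>s. sqrt ((norm (E s))\<^sup>2 + \<epsilon>\<^sup>2)) has_real_derivative
           (E s \<bullet> E') / sqrt ((norm (E s))\<^sup>2 + \<epsilon>\<^sup>2)) (at s within S)"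
proof -
  have pos: "(norm (E s))\<^sup>2 + \<epsilon>\<^sup>2 > 0"
    using \<open>\<epsilon> \<noteq> 0\<close> by (simp add: add_nonneg_pos)
  have "((\<lambda>s. E s \<bullet> E s) has_derivative (\<lambda>h. E s \<bullet> (h *\<^sub>R E') + (h *\<^sub>R E') \<bullet> E s)) (at s within S)"
    using E by (intro has_derivative_inner) (simp_all add: has_vector_derivative_def)
  then have "((\<lambda>s. (norm (E s))\<^sup>2 + \<epsilon>\<^sup>2) has_real_derivative 2 * (E s \<bullet> E')) (at s within S)"
    unfolding has_field_derivative_def power2_norm_eq_inner
    by (intro has_derivative_add_const, rule has_derivative_eq_rhs)
      (auto simp: fun_eq_iff inner_commute algebra_simps)
  from DERIV_chain2[OF DERIV_real_sqrt[OF pos] this]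
  show ?thesis
    by (simp add: field_simps)
qed

lemma smoothed_norm_derivative_le:
  fixes a \<epsilon> lam c p :: real
  assumes "0 \<le> a" "0 < \<epsilon>" "0 < lam" "0 \<le> c" and p: "p \<le> - lam * a\<^sup>2 + c * a"
  shows "p / sqrt (a\<^sup>2 + \<epsilon>\<^sup>2) \<le> - lam * sqrt (a\<^sup>2 + \<epsilon>\<^sup>2) + (c + lam * \<epsilon>)"
proof -
  define V where "V = sqrt (a\<^sup>2 + \<epsilon>\<^sup>2)"
  have "a \<le> V" "\<epsilon> \<le> V"
    unfolding V_def by (simp_all add: real_le_rsqrt)
  have "(- lam * V + (c + lam * \<epsilon>)) * V = - lam * V\<^sup>2 + c * V + lam * \<epsilon> * V"
    by (simp add: power2_eq_square algebra_simps)
  also have "\<dots> = - lam * a\<^sup>2 + c * V + lam * \<epsilon> * (V - \<epsilon>)"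
    by (simp add: V_def power2_eq_square algebra_simps)
  also have "\<dots> \<ge> - lam * a\<^sup>2 + c * a"
  proof -
    have "0 \<le> lam * \<epsilon> * (V - \<epsilon>)"
      using \<open>\<epsilon> \<le> V\<close> assms by simp
    then show ?thesis
      using mult_left_mono[OF \<open>a \<le> V\<close> \<open>0 \<le> c\<close>] by linarith
  qed
  finally have "p \<le> (- lam * V + (c + lam * \<epsilon>)) * V"
    using p by linarith
  moreover have "V > 0"
    using \<open>\<epsilon> \<le> V\<close> \<open>0 < \<epsilon>\<close> by linarith
  ultimately show ?thesis
    by (simp add: V_def divide_le_eq)
qed

lemma norm_exp_bound_of_inner_derivative:
  fixes E E' :: "real \<Rightarrow> 'a::real_inner" and lam c t :: real
  assumes lam: "lam > 0" and c: "c \<ge> 0"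
    and der: "\<And>s. s \<ge> 0 \<Longrightarrow> (E has_vector_derivative E' s) (at s within {0..})"
    and ineq: "\<And>s. s \<ge> 0 \<Longrightarrow> E s \<bullet> E' s \<le> - lam * (norm (E s))\<^sup>2 + c * norm (E s)"
    and t: "t \<ge> 0"
  shows "norm (E t) \<le> exp (- lam * t) * norm (E 0) + c / lam * (1 - exp (- lam * t))"
proof (rule field_le_epsilon)
  fix \<epsilon> :: real assume "\<epsilon> > 0"
  define V where "V s = sqrt ((norm (E s))\<^sup>2 + \<epsilon>\<^sup>2)" for s
  have "V t \<le> exp (- lam * t) * V 0 + (c + lam * \<epsilon>) / lam * (1 - exp (- lam * t))"
  proof (rule differential_inequality_exp_bound[OF lam _ _ t])
    show "(V has_real_derivative (E s \<bullet> E' s) / V s) (at s within {0..})" if "s \<ge> 0" for s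
      unfolding V_def using der[OF that] \<open>\<epsilon> > 0\<close> by (intro has_real_derivative_sqrt_norm_sq_add) auto
    show "(E s \<bullet> E' s) / V s \<le> - lam * V s + (c + lam * \<epsilon>)" if "s \<ge> 0" for s
      unfolding V_def using ineq[OF that] \<open>\<epsilon> > 0\<close> lam c by (intro smoothed_norm_derivative_le) auto
  qed
  moreover have "norm (E t) \<le> V t"
    unfolding V_def by (simp add: real_le_rsqrt)
  moreover have "V 0 \<le> norm (E 0) + \<epsilon>"
    unfolding V_def using \<open>\<epsilon> > 0\<close> by (intro real_le_lsqrt) (simp_all add: power2_sum)
  moreover have "0 < exp (- lam * t)" "exp (- lam * t) \<le> 1"
    using lam t by simp_all
  ultimately have "norm (E t) \<le> exp (- lam * t) * (norm (E 0) + \<epsilon>) + (c + lam * \<epsilon>) / lam * (1 - exp (- lam * t))"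
    by (smt (verit) mult_left_mono)
  also have "\<dots> = exp (- lam * t) * norm (E 0) + c / lam * (1 - exp (- lam * t)) + \<epsilon>"
    using lam by (simp add: field_simps)
  finally show "norm (E t) \<le> exp (- lam * t) * norm (E 0) + c / lam * (1 - exp (- lam * t)) + \<epsilon>" .
qed

lemma disturbance_observer_error_derivative:
  fixes x \<xi> \<gamma> :: "real \<Rightarrow> real^'n" and L :: "real^'n^'n" and F d dm \<gamma>' :: "real^'n"
  assumes "(x has_vector_derivative F + d) (at t within S)"
    and "(\<xi> has_vector_derivative - (L *v (\<xi> t + dm + L *v x t + F))) (at t within S)"
    and "(\<gamma> has_vector_derivative \<gamma>') (at t within S)"
    and "d = dm + \<gamma> t"
  shows "((\<lambda>s. L *v x s + \<xi> s - \<gamma> s) has_vector_derivative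
           - (L *v (L *v x t + \<xi> t - \<gamma> t)) - \<gamma>') (at t within S)"
proof -
  have "((\<lambda>s. L *v x s + \<xi> s - \<gamma> s) has_vector_derivative
      L *v (F + d) + - (L *v (\<xi> t + dm + L *v x t + F)) - \<gamma>') (at t within S)"
    using assms(1-3)
    by (intro has_vector_derivative_diff has_vector_derivative_add
        bounded_linear.has_vector_derivative[OF matrix_vector_mul_bounded_linear]) auto
  moreover have "L *v (F + d) + - (L *v (\<xi> t + dm + L *v x t + F)) = - (L *v (L *v x t + \<xi> t - \<gamma> t))"
    using assms(4) by (simp add: algebra_simps)
  ultimately show ?thesis
    by simp
qed

theorem theorem1:
  fixes x :: "real \<Rightarrow> real^'n"
    and u :: "real \<Rightarrow> real^'m"
    and f :: "real^'n \<Rightarrow> real^'n"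
    and g :: "real^'n \<Rightarrow> real^'m^'n"
    and d :: "real \<Rightarrow> real^'n"
    and \<phi> :: "real \<Rightarrow> (real^'n) list \<Rightarrow> real^'p^'n"
    and \<theta> :: "real^'p"
    and \<gamma> \<gamma>' :: "real \<Rightarrow> real^'n"
    and \<tau> :: real and M :: nat
    and \<gamma>bar d\<gamma> :: real
    and L :: "real^'n^'n"
    and \<xi> :: "real \<Rightarrow> real^'n"
  defines "dmodel \<equiv> (\<lambda>t. \<phi> t (delay_embedding x \<tau> M t) *v \<theta>)"
  defines "dhat \<equiv> (\<lambda>t. dmodel t + L *v x t + \<xi> t)"
  assumes fC1: "C1_map f" and gC1: "C1_map g"
    and tau_pos: "\<tau> > 0"
    and sys: "\<And>t. t \<ge> 0 \<Longrightarrow>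
       (x has_vector_derivative (f (x t) + g (x t) *v u t + d t)) (at t within {0..})"
    and d_decomp: "\<And>t. t \<ge> 0 \<Longrightarrow> d t = dmodel t + \<gamma> t"
    and dmodel_diff: "\<And>t. t \<ge> 0 \<Longrightarrow> dmodel differentiable (at t within {0..})"
    and gamma_deriv: "\<And>t. t \<ge> 0 \<Longrightarrow> (\<gamma> has_vector_derivative \<gamma>' t) (at t within {0..})"
    and gamma_bound: "\<And>t. t \<ge> 0 \<Longrightarrow> norm (\<gamma> t) \<le> \<gamma>bar"
    and dgamma_bound: "\<And>t. t \<ge> 0 \<Longrightarrow> norm (\<gamma>' t) \<le> d\<gamma>"
    and gbar_pos: "\<gamma>bar > 0" and dg_pos: "d\<gamma> > 0"
    and L_sym: "symmetric_matrix L" and L_pd: "pos_def_matrix L"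
    and est: "\<And>t. t \<ge> 0 \<Longrightarrow>
       (\<xi> has_vector_derivative
          (- (L *v (\<xi> t + dmodel t + L *v x t + f (x t) + g (x t) *v u t)))) (at t within {0..})"
  shows "\<forall>t\<ge>0. norm (dhat t - d t)
           \<le> exp (- lambda_min L * t) * norm (dhat 0 - d 0)
             + d\<gamma> / lambda_min L * (1 - exp (- lambda_min L * t))"
proof -
  define E where "E t = L *v x t + \<xi> t - \<gamma> t" for t
  have E_der: "(E has_vector_derivative - (L *v E t) - \<gamma>' t) (at t within {0..})" if t: "t \<ge> 0" for t
    unfolding E_def
  proof (rule disturbance_observer_error_derivative[OF sys[OF t] _ gamma_deriv[OF t] d_decomp[OF t]])
    show "(\<xi> has_vector_derivative
        - (L *v (\<xi> t + dmodel t + L *v x t + (f (x t) + g (x t) *v u t)))) (at t within {0..})"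
      using est[OF t] by (simp only: add.assoc)
  qed
  have E_bound: "norm (E t) \<le> exp (- lambda_min L * t) * norm (E 0)
      + d\<gamma> / lambda_min L * (1 - exp (- lambda_min L * t))" if t: "t \<ge> 0" for t
  proof (rule norm_exp_bound_of_inner_derivative[OF lambda_min_pos[OF L_sym L_pd] _ E_der _ t])
    show "0 \<le> d\<gamma>"
      using dg_pos by simp
    show "E s \<bullet> (- (L *v E s) - \<gamma>' s) \<le> - lambda_min L * (norm (E s))\<^sup>2 + d\<gamma> * norm (E s)"
      if "s \<ge> 0" for s
      using L_sym dgamma_bound[OF that] by (rule inner_neg_symmetric_mult_diff_le)
  qed
  have "dhat t - d t = E t" if "t \<ge> 0" for t
    using d_decomp[OF that] by (simp add: dhat_def E_def)
  then show ?thesis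
    using E_bound by simp
qed

end
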